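(* Let $m,n\in\mathbb{N}$, $0<\ell\le\infty$, and let $Q_1(x)$, $Q_0(x)$ be $m\times m$ matrix functions, locally summable on $[0,\ell)$. Consider the system $$y'(x,\lambda)=-\big(\lambda Q_1(x)+Q_0(x)\big)y(x,\lambda)\qquad(y'=\tfrac{d}{dx}y).$$ Let $A_1,A_2,S(0)$ be $n\times n$ matrices and $\Pi_1(0),\Pi_2(0)$ be $n\times m$ matrices satisfying $$A_1S(0)-S(0)A_2=\Pi_1(0)\Pi_2(0)^*.$$ Define $\Pi_1(x),\Pi_2(x),S(x)$ on $[0,\ell)$ by these initial values and $$\Pi_1'=A_1\Pi_1Q_1+\Pi_1Q_0,\qquad (\Pi_2^* )'=-Q_1\Pi_2^*A_2-Q_0\Pi_2^*,\qquad S'=\Pi_1Q_1\Pi_2^*,$$ and for $\lambda$ not an eigenvalue of $A_1$ set $$w_A(x,\lambda)=I_m-\Pi_2(x)^*S(x)^{-1}(A_1-\lambda I_n)^{-1}\Pi_1(x).$$ Let $y(x,\lambda)$ satisfy the system above. Then, at the points $x$ where $S(x)$ is invertible (i.e., on any subinterval of $[0,\ell)$ on which $S(x)$ is invertible), the function $\widetilde y(x,\lambda):=w_A(x,\lambda)y(x,\lambda)$ satisfies $$\widetilde y'(x,\lambda)=-\big(\lambda Q_1(x)+\widetilde Q_0(x)\big)\widetilde y(x,\lambda),$$ where $\widetilde Q_0(x)=Q_0(x)-\big(Q_1(x)X(x)-X(x)Q_1(x)\big)$ and $X(x)=\Pi_2(x)^*S(x)^{-1}\Pi_1(x)$.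
   Context: $I_n$ is the $n\times n$ identity matrix and $H^*$ denotes the conjugate transpose of a matrix $H$. Differential equations with locally summable coefficients are understood for absolutely continuous solutions, almost everywhere. *)

theory Defs
  imports "HOL-Analysis.Analysis"
begin

definition ctrans :: "complex^'c^'r \<Rightarrow> complex^'r^'c" where
  "ctrans A = (\<chi> i j. cnj (A $ j $ i))"

definition abs_cont_on :: "(real \<Rightarrow> 'a::real_normed_vector) \<Rightarrow> real \<Rightarrow> real \<Rightarrow> bool" where
  "abs_cont_on f a b \<longleftrightarrow>
     (\<forall>e>0. \<exists>d>0. \<forall>(N::nat) (u::nat \<Rightarrow> real) v.
        (\<forall>k<N. a \<le> u k \<and> u k \<le> v k \<and> v k \<le> b) \<and>
        (\<forall>i<N. \<forall>j<N. i \<noteq> j \<longrightarrow> v i \<le> u j \<or> v j \<le> u i) \<and>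
        (\<Sum>k<N. v k - u k) < d
        \<longrightarrow> (\<Sum>k<N. norm (f (v k) - f (u k))) < e)"

definition loc_summable :: "real set \<Rightarrow> (real \<Rightarrow> 'a::euclidean_space) \<Rightarrow> bool" where
  "loc_summable I f \<longleftrightarrow> (\<forall>a b. {a..b} \<subseteq> I \<longrightarrow> f absolutely_integrable_on {a..b})"

definition ac_solution :: "real set \<Rightarrow> (real \<Rightarrow> 'a \<Rightarrow> 'a) \<Rightarrow> (real \<Rightarrow> 'a::real_normed_vector) \<Rightarrow> bool" where
  "ac_solution I F y \<longleftrightarrow>
     (\<forall>a b. {a..b} \<subseteq> I \<longrightarrow> abs_cont_on y a b) \<and>
     (AE x in lebesgue. x \<in> I \<longrightarrow> (y has_vector_derivative F x (y x)) (at x))"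

definition half_line :: "ereal \<Rightarrow> real set" where
  "half_line l = {x. 0 \<le> x \<and> ereal x < l}"

end

theory Submission
  imports Defs
begin

(* The Sylvester identity A1 S - S A2 = Pi1 Pi2^* holds on the whole of [0, l): both sides are
   absolutely continuous with the same derivative almost everywhere, and an absolutely
   continuous function whose derivative vanishes almost everywhere is constant.

   Where S is invertible put W = I - Pi2^* S^-1 R Pi1 with R = (A1 - lam I)^-1.  The product
   rule together with (S^-1)' = - S^-1 S' S^-1 gives W', which the identity, in the form
   A2 S^-1 = S^-1 A1 - S^-1 Pi1 Pi2^* S^-1, and R A1 = A1 R = I + lam R turn into
   W' = W (lam Q1 + Q0) - (lam Q1 + ~Q0) W.  Hence (W y)' = - (lam Q1 + ~Q0) W y almost
   everywhere, and W y is absolutely continuous because products and inverses of absolutely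
   continuous matrix functions are. *)



section \<open>Matrix algebra\<close>


lemma matrix_add_rdistrib: "(A + B) ** C = A ** C + B ** C"
  by (simp add: matrix_matrix_mult_def vec_eq_iff sum.distrib distrib_right)

lemma matrix_diff_ldistrib: "A ** (B - C) = A ** B - A ** (C :: 'a::ring_1^_^_)"
  by (simp add: matrix_matrix_mult_def vec_eq_iff sum_subtractf right_diff_distrib)

lemma matrix_diff_rdistrib: "(A - B) ** C = A ** C - B ** (C :: 'a::ring_1^_^_)"
  by (simp add: matrix_matrix_mult_def vec_eq_iff sum_subtractf left_diff_distrib)

lemma matrix_minus_left: "- A ** B = - (A ** (B :: 'a::ring_1^_^_))"
  by (simp add: matrix_matrix_mult_def vec_eq_iff sum_negf)

lemma matrix_minus_right: "A ** - B = - (A ** (B :: 'a::ring_1^_^_))"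
  by (simp add: matrix_matrix_mult_def vec_eq_iff sum_negf)

text \<open>Scalar multiples are kept as a separate constant: writing them as \<open>mat c ** A\<close> and
  commuting \<open>mat c\<close> to the front would make the simplifier loop on \<open>mat c ** mat c\<close>.\<close>

definition mat_smult :: "'a::times \<Rightarrow> 'a^'n^'m \<Rightarrow> 'a^'n^'m"
  where "mat_smult c A = (\<chi> i j. c * A $ i $ j)"

lemma mat_smult_matrix_mult_left: "mat_smult c A ** B = mat_smult c (A ** (B :: 'a::comm_semiring_1^_^_))"
  and mat_smult_matrix_mult_right: "A ** mat_smult c B = mat_smult c (A ** (B :: 'a::comm_semiring_1^_^_))"
  by (simp_all add: mat_smult_def matrix_matrix_mult_def vec_eq_iff sum_distrib_left ac_simps)

lemma mat_smult_add: "mat_smult c (A + B) = mat_smult c A + mat_smult c (B :: 'a::ring^_^_)"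
  and mat_smult_diff: "mat_smult c (A - B) = mat_smult c A - mat_smult c (B :: 'a::ring^_^_)"
  and mat_smult_minus: "mat_smult c (- A) = - mat_smult c (A :: 'a::ring^_^_)"
  by (simp_all add: mat_smult_def vec_eq_iff algebra_simps)

lemma matrix_mult_mat: "A ** mat c = mat_smult c (A :: 'a::comm_semiring_1^_^_)"
  by (simp add: mat_smult_def matrix_matrix_mult_def mat_def vec_eq_iff if_distrib if_distribR
      sum.delta' mult.commute cong: if_cong)

lemma mat_matrix_mult: "mat c ** A = mat_smult c (A :: 'a::semiring_1^_^_)"
  by (simp add: mat_smult_def matrix_matrix_mult_def mat_def vec_eq_iff if_distrib if_distribR
      sum.delta' cong: if_cong)

lemma mat_smult_matrix_vector_mult: "mat_smult c A *v v = c *s (A *v (v :: 'a::comm_semiring_1^_))"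
  by (simp add: mat_smult_def matrix_vector_mult_def vec_eq_iff sum_distrib_left mult.assoc)

lemmas matrix_ring_simps = matrix_add_ldistrib matrix_add_rdistrib matrix_diff_ldistrib
  matrix_diff_rdistrib matrix_minus_left matrix_minus_right matrix_mul_assoc mat_smult_matrix_mult_left mat_smult_matrix_mult_right
  mat_smult_add mat_smult_diff mat_smult_minus

lemma bounded_bilinear_matrix_matrix_mult:
  "bounded_bilinear ((**) :: 'a::{euclidean_space,real_algebra_1}^'k^'m \<Rightarrow> 'a^'n^'k \<Rightarrow> 'a^'n^'m)"
  unfolding bilinear_conv_bounded_bilinear[symmetric] bilinear_def linear_iff
  by (simp add: matrix_add_ldistrib matrix_add_rdistrib scalar_matrix_assoc matrix_scalar_ac)

lemma bounded_bilinear_matrix_vector_mult: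
  "bounded_bilinear ((*v) :: 'a::{euclidean_space,real_algebra_1}^'n^'m \<Rightarrow> 'a^'n \<Rightarrow> 'a^'m)"
  unfolding bilinear_conv_bounded_bilinear[symmetric] bilinear_def linear_iff
  by (simp add: matrix_vector_right_distrib matrix_vector_mult_add_rdistrib)
    (simp add: matrix_vector_mult_def vec_eq_iff scaleR_sum_right)

lemma matrix_inv_right: "invertible A \<Longrightarrow> A ** matrix_inv A = mat 1"
  and matrix_inv_left: "invertible A \<Longrightarrow> matrix_inv A ** A = mat 1"
  unfolding invertible_def matrix_inv_def by (metis (mono_tags, lifting) someI_ex)+

lemma matrix_inv_diff:
  fixes A B :: "'a::ring_1^'n^'n"
  assumes "invertible A" "invertible B"
  shows "matrix_inv B - matrix_inv A = matrix_inv B ** (A - B) ** matrix_inv A"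
proof -
  have "matrix_inv B ** (A - B) ** matrix_inv A
      = matrix_inv B ** (A ** matrix_inv A) - (matrix_inv B ** B) ** matrix_inv A"
    by (simp add: matrix_mul_assoc matrix_diff_ldistrib matrix_diff_rdistrib)
  then show ?thesis by (simp add: matrix_inv_left matrix_inv_right assms)
qed

text \<open>With \<open>M = S\<^sup>-\<^sup>1\<close> and \<open>R = (A1 - \<lambda> I)\<^sup>-\<^sup>1\<close>, \<open>W\<close> is \<open>w\<^sub>A\<close> at a point and the
  left-hand side is its derivative, obtained by the product rule from the differential
  equations for \<open>\<Pi>\<^sub>2\<^sup>*\<close>, \<open>S\<^sup>-\<^sup>1\<close> and \<open>\<Pi>\<^sub>1\<close>.\<close>

lemma gauge_transform_derivative_identity:
  fixes Q1 Q0 :: "'a::comm_ring_1^'m^'m" and A1 A2 M R S :: "'a^'n^'n"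
    and P1 :: "'a^'m^'n" and P2 :: "'a^'n^'m"
  assumes MS: "M ** S = mat 1" and SM: "S ** M = mat 1"
    and RA: "R ** (A1 - mat lam) = mat 1" and AR: "(A1 - mat lam) ** R = mat 1"
    and sylvester: "A1 ** S - S ** A2 = P1 ** P2"
  defines "W \<equiv> mat 1 - P2 ** M ** R ** P1" and "X \<equiv> P2 ** M ** P1"
  shows "- ((- (Q1 ** P2 ** A2) - Q0 ** P2) ** M ** R ** P1
            + P2 ** (- (M ** (P1 ** Q1 ** P2) ** M)) ** R ** P1
            + P2 ** M ** R ** (A1 ** P1 ** Q1 + P1 ** Q0))
    = W ** (mat_smult lam Q1 + Q0) - (mat_smult lam Q1 + Q0 - (Q1 ** X - X ** Q1)) ** W"
proof -
  have RA1: "Z ** R ** A1 = Z + mat_smult lam (Z ** R)" for Z :: "'a^'n^'k"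
  proof -
    have "R ** A1 = mat 1 + mat_smult lam R"
      using RA by (simp add: matrix_diff_ldistrib matrix_mult_mat algebra_simps)
    then have "Z ** (R ** A1) = Z + mat_smult lam (Z ** R)"
      by (simp add: matrix_ring_simps)
    then show ?thesis by (simp add: matrix_mul_assoc)
  qed
  have A1R: "Z ** A1 ** R = Z + mat_smult lam (Z ** R)" for Z :: "'a^'n^'k"
  proof -
    have "A1 ** R = mat 1 + mat_smult lam R"
      using AR by (simp add: matrix_diff_rdistrib mat_matrix_mult algebra_simps)
    then have "Z ** (A1 ** R) = Z + mat_smult lam (Z ** R)"
      by (simp add: matrix_ring_simps)
    then show ?thesis by (simp add: matrix_mul_assoc)
  qed
  have A2M: "Z ** A2 ** M = Z ** M ** A1 - Z ** M ** P1 ** P2 ** M" for Z :: "'a^'n^'k"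
  proof -
    have "M ** (A1 ** S - S ** A2) ** M = M ** A1 ** (S ** M) - (M ** S) ** A2 ** M"
      by (simp add: matrix_ring_simps)
    then have "M ** A1 - A2 ** M = M ** (A1 ** S - S ** A2) ** M"
      by (simp add: MS SM)
    then have "A2 ** M = M ** A1 - M ** P1 ** P2 ** M"
      by (simp add: sylvester matrix_mul_assoc algebra_simps)
    then have "Z ** (A2 ** M) = Z ** M ** A1 - Z ** M ** P1 ** P2 ** M"
      by (simp add: matrix_ring_simps)
    then show ?thesis by (simp add: matrix_mul_assoc)
  qed
  show ?thesis
    unfolding W_def X_def by (simp add: matrix_ring_simps A2M RA1 A1R)
qed

section \<open>Absolute continuity\<close>


definition nonoverlapping_subintervals :: "real \<Rightarrow> real \<Rightarrow> nat \<Rightarrow> (nat \<Rightarrow> real) \<Rightarrow> (nat \<Rightarrow> real) \<Rightarrow> bool"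
  where "nonoverlapping_subintervals a b N u v \<longleftrightarrow>
    (\<forall>k<N. a \<le> u k \<and> u k \<le> v k \<and> v k \<le> b) \<and>
    (\<forall>i<N. \<forall>j<N. i \<noteq> j \<longrightarrow> v i \<le> u j \<or> v j \<le> u i)"

lemma abs_cont_on_iff:
  "abs_cont_on f a b \<longleftrightarrow> (\<forall>e>0. \<exists>d>0. \<forall>N u v. nonoverlapping_subintervals a b N u v \<and>
     (\<Sum>k<N. v k - u k) < d \<longrightarrow> (\<Sum>k<N. norm (f (v k) - f (u k))) < e)"
  unfolding abs_cont_on_def nonoverlapping_subintervals_def by simp

lemma abs_cont_onD:
  assumes "abs_cont_on f a b" "0 < e"
  obtains d where "0 < d" "\<And>N u v. nonoverlapping_subintervals a b N u v \<Longrightarrow>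
    (\<Sum>k<N. v k - u k) < d \<Longrightarrow> (\<Sum>k<N. norm (f (v k) - f (u k))) < e"
proof -
  have "\<exists>d>0. \<forall>N u v. nonoverlapping_subintervals a b N u v \<and> (\<Sum>k<N. v k - u k) < d \<longrightarrow>
      (\<Sum>k<N. norm (f (v k) - f (u k))) < e"
    using assms unfolding abs_cont_on_iff by simp
  then show thesis using that by auto
qed

lemma abs_cont_on_imp_continuous_on:
  assumes "abs_cont_on f a b"
  shows "continuous_on {a..b} f"
  unfolding continuous_on_iff
proof (intro ballI allI impI)
  fix x e :: real
  assume x: "x \<in> {a..b}" and "0 < e"
  obtain d where "0 < d" and small: "\<And>N u v. nonoverlapping_subintervals a b N u v \<Longrightarrow>
    (\<Sum>k<N. v k - u k) < d \<Longrightarrow> (\<Sum>k<N. norm (f (v k) - f (u k))) < e"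
    by (fact abs_cont_onD[OF assms \<open>0 < e\<close>])
  have "dist (f x') (f x) < e" if "x' \<in> {a..b}" "dist x' x < d" for x'
  proof -
    have "(\<Sum>k<Suc 0. norm (f (max x x') - f (min x x'))) < e"
    proof (rule small)
      show "nonoverlapping_subintervals a b (Suc 0) (\<lambda>_. min x x') (\<lambda>_. max x x')"
        using x that(1) by (simp add: nonoverlapping_subintervals_def)
      show "(\<Sum>k<Suc 0. max x x' - min x x') < d"
        using that(2) by (cases "x \<le> x'") (simp_all add: dist_real_def max_def min_def)
    qed
    then show ?thesis
      by (cases "x \<le> x'") (simp_all add: dist_norm norm_minus_commute max_def min_def)
  qed
  with \<open>0 < d\<close> show "\<exists>d>0. \<forall>x'\<in>{a..b}. dist x' x < d \<longrightarrow> dist (f x') (f x) < e"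
    by blast
qed

lemma abs_cont_on_dominated:
  assumes f: "abs_cont_on f a b" and g: "abs_cont_on g a b" and "0 \<le> C"
    and dom: "\<And>u v. a \<le> u \<Longrightarrow> u \<le> v \<Longrightarrow> v \<le> b \<Longrightarrow>
      norm (h v - h u) \<le> C * (norm (f v - f u) + norm (g v - g u))"
  shows "abs_cont_on h a b"
  unfolding abs_cont_on_iff
proof (intro allI impI)
  fix e :: real
  assume "0 < e"
  define e' where "e' = e / (2 * C + 1)"
  have "0 < e'" using \<open>0 < e\<close> \<open>0 \<le> C\<close> by (simp add: e'_def)
  obtain d1 where "0 < d1" and f_small: "\<And>N u v. nonoverlapping_subintervals a b N u v \<Longrightarrow>
      (\<Sum>k<N. v k - u k) < d1 \<Longrightarrow> (\<Sum>k<N. norm (f (v k) - f (u k))) < e'"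
    by (fact abs_cont_onD[OF f \<open>0 < e'\<close>])
  obtain d2 where "0 < d2" and g_small: "\<And>N u v. nonoverlapping_subintervals a b N u v \<Longrightarrow>
      (\<Sum>k<N. v k - u k) < d2 \<Longrightarrow> (\<Sum>k<N. norm (g (v k) - g (u k))) < e'"
    by (fact abs_cont_onD[OF g \<open>0 < e'\<close>])
  have "(\<Sum>k<N. norm (h (v k) - h (u k))) < e"
    if uv: "nonoverlapping_subintervals a b N u v" and short: "(\<Sum>k<N. v k - u k) < min d1 d2"
    for N u v
  proof -
    have "(\<Sum>k<N. norm (h (v k) - h (u k)))
        \<le> (\<Sum>k<N. C * (norm (f (v k) - f (u k)) + norm (g (v k) - g (u k))))"
      using uv by (intro sum_mono dom) (auto simp: nonoverlapping_subintervals_def)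
    also have "\<dots> = C * ((\<Sum>k<N. norm (f (v k) - f (u k))) + (\<Sum>k<N. norm (g (v k) - g (u k))))"
      by (simp add: sum_distrib_left sum.distrib distrib_left)
    also have "\<dots> \<le> C * (2 * e')"
      using f_small[OF uv] g_small[OF uv] short \<open>0 \<le> C\<close> by (intro mult_left_mono) auto
    also have "\<dots> < e"
      using \<open>0 < e\<close> \<open>0 \<le> C\<close> by (simp add: e'_def field_simps)
    finally show ?thesis .
  qed
  then show "\<exists>d>0. \<forall>N u v. nonoverlapping_subintervals a b N u v \<and> (\<Sum>k<N. v k - u k) < d \<longrightarrow>
      (\<Sum>k<N. norm (h (v k) - h (u k))) < e"
    using \<open>0 < d1\<close> \<open>0 < d2\<close> by (intro exI[of _ "min d1 d2"]) auto
qed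

lemma abs_cont_on_const: "abs_cont_on (\<lambda>x. c) a b"
  unfolding abs_cont_on_def by (intro allI impI exI[of _ 1]) simp

lemma abs_cont_on_diff:
  assumes "abs_cont_on f a b" "abs_cont_on g a b"
  shows "abs_cont_on (\<lambda>x. f x - g x) a b"
proof (rule abs_cont_on_dominated[OF assms, of 1])
  fix u v
  show "norm ((f v - g v) - (f u - g u)) \<le> 1 * (norm (f v - f u) + norm (g v - g u))"
    using norm_diff_triangle_ineq[of "f v" "- g v" "f u" "- g u"] by (simp add: norm_minus_commute)
qed simp

lemma abs_cont_on_bounded:
  fixes f :: "real \<Rightarrow> 'a::real_normed_vector"
  assumes "abs_cont_on f a b"
  obtains B where "0 < B" "\<And>x. x \<in> {a..b} \<Longrightarrow> norm (f x) \<le> B"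
proof -
  have "bounded (f ` {a..b})"
    by (intro compact_imp_bounded compact_continuous_image abs_cont_on_imp_continuous_on[OF assms]
        compact_Icc)
  then show ?thesis using that by (auto simp: bounded_pos)
qed

lemma abs_cont_on_bilinear:
  assumes "bounded_bilinear pr" and f: "abs_cont_on f a b" and g: "abs_cont_on g a b"
  shows "abs_cont_on (\<lambda>x. pr (f x) (g x)) a b"
proof -
  interpret pr: bounded_bilinear pr by fact
  obtain Bf where "0 < Bf" and Bf: "\<And>x. x \<in> {a..b} \<Longrightarrow> norm (f x) \<le> Bf"
    using abs_cont_on_bounded[OF f] by blast
  obtain Bg where "0 < Bg" and Bg: "\<And>x. x \<in> {a..b} \<Longrightarrow> norm (g x) \<le> Bg"
    using abs_cont_on_bounded[OF g] by blast
  obtain K where K: "0 < K" "\<And>x y. norm (pr x y) \<le> norm x * norm y * K"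
    using pr.pos_bounded by blast
  show ?thesis
  proof (rule abs_cont_on_dominated[OF f g, of "K * (Bf + Bg)"])
    fix u v assume uv: "a \<le> u" "u \<le> v" "v \<le> b"
    have "pr (f v) (g v) - pr (f u) (g u) = pr (f v - f u) (g v) + pr (f u) (g v - g u)"
      by (simp only: pr.diff_left pr.diff_right) simp
    then have "norm (pr (f v) (g v) - pr (f u) (g u))
        \<le> norm (pr (f v - f u) (g v)) + norm (pr (f u) (g v - g u))"
      by (metis norm_triangle_ineq)
    also have "\<dots> \<le> norm (f v - f u) * norm (g v) * K + norm (f u) * norm (g v - g u) * K"
      using K(2)[of "f v - f u" "g v"] K(2)[of "f u" "g v - g u"] by (rule add_mono)
    also have "\<dots> \<le> norm (f v - f u) * Bg * K + Bf * norm (g v - g u) * K"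
      using uv Bf[of u] Bg[of v] \<open>0 < K\<close>
      by (intro add_mono mult_right_mono mult_left_mono) auto
    also have "\<dots> \<le> K * (Bf + Bg) * (norm (f v - f u) + norm (g v - g u))"
      using K \<open>0 < Bf\<close> \<open>0 < Bg\<close> by (simp add: algebra_simps)
    finally show "norm (pr (f v) (g v) - pr (f u) (g u))
        \<le> K * (Bf + Bg) * (norm (f v - f u) + norm (g v - g u))" .
  qed (use K \<open>0 < Bf\<close> \<open>0 < Bg\<close> in simp)
qed

lemma interval_interiors_disjoint:
  fixes c1 d1 c2 d2 :: real
  assumes "c1 < d1" "c2 < d2" "{c1<..<d1} \<inter> {c2<..<d2} = {}"
  shows "d1 \<le> c2 \<or> d2 \<le> c1"
proof (rule ccontr)
  assume "\<not> ?thesis"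
  then have "(max c1 c2 + min d1 d2) / 2 \<in> {c1<..<d1} \<inter> {c2<..<d2}"
    using assms(1,2) by (auto simp: max_def min_def)
  with assms(3) show False by blast
qed

lemma division_of_real_interval:
  fixes \<D> :: "real set set"
  assumes "\<D> division_of S" "K \<in> \<D>"
  obtains c d where "K = {c..d}" "c \<le> d"
proof -
  obtain c d where "K = cbox c d" using division_ofD(4)[OF assms] by blast
  moreover have "K \<noteq> {}" using division_ofD(3)[OF assms] .
  ultimately show ?thesis using that by auto
qed

lemma division_enumeration:
  fixes \<D> :: "real set set"
  assumes div: "\<D> division_of \<Union>\<D>" and sub: "\<Union>\<D> \<subseteq> {a..b}"
  obtains N u v where "nonoverlapping_subintervals a b N u v"
    "\<And>h :: real \<Rightarrow> real \<Rightarrow> 'b::comm_monoid_add. (\<And>c. h c c = 0) \<Longrightarrow>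
       (\<Sum>K\<in>\<D>. h (Inf K) (Sup K)) = (\<Sum>k<N. h (u k) (v k))"
proof -
  \<comment> \<open>Degenerate intervals contribute nothing but would violate non-overlapping.\<close>
  define \<D>' where "\<D>' = {K \<in> \<D>. Inf K < Sup K}"
  have "finite \<D>'" using div by (auto simp: \<D>'_def)
  then obtain g where g: "bij_betw g {..<card \<D>'} \<D>'"
    using ex_bij_betw_nat_finite lessThan_atLeast0 by metis
  define N where "N = card \<D>'"
  have gD: "g k \<in> \<D>" "Inf (g k) < Sup (g k)" if "k < N" for k
    using g that by (auto simp: N_def bij_betw_def \<D>'_def)
  have g_interval: "\<exists>c d. g k = {c..d} \<and> c < d \<and> a \<le> c \<and> d \<le> b" if k: "k < N" for k
  proof -
    obtain c d where "g k = {c..d}" "c \<le> d" by (rule division_of_real_interval[OF div gD(1)[OF k]])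
    moreover have "g k \<subseteq> {a..b}" using sub gD(1)[OF k] by blast
    ultimately show ?thesis using gD(2)[OF k] by auto
  qed
  have "nonoverlapping_subintervals a b N (\<lambda>k. Inf (g k)) (\<lambda>k. Sup (g k))"
    unfolding nonoverlapping_subintervals_def
  proof (intro conjI allI impI)
    fix k assume "k < N"
    then show "a \<le> Inf (g k)" "Inf (g k) \<le> Sup (g k)" "Sup (g k) \<le> b"
      using g_interval[OF \<open>k < N\<close>] by auto
  next
    fix i j assume ij: "i < N" "j < N" "i \<noteq> j"
    then have "g i \<noteq> g j" using g by (auto simp: N_def bij_betw_def inj_on_def)
    then have "interior (g i) \<inter> interior (g j) = {}"
      using division_ofD(5)[OF div] gD(1) ij by blast
    moreover obtain ci di cj dj where "g i = {ci..di}" "ci < di" "g j = {cj..dj}" "cj < dj"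
      using g_interval[OF ij(1)] g_interval[OF ij(2)] by blast
    ultimately show "Sup (g i) \<le> Inf (g j) \<or> Sup (g j) \<le> Inf (g i)"
      using interval_interiors_disjoint by auto
  qed
  moreover have "(\<Sum>K\<in>\<D>. h (Inf K) (Sup K)) = (\<Sum>k<N. h (Inf (g k)) (Sup (g k)))"
    if degenerate: "\<And>c. h c c = 0" for h :: "real \<Rightarrow> real \<Rightarrow> 'b"
  proof -
    have "(\<Sum>K\<in>\<D>. h (Inf K) (Sup K)) = (\<Sum>K\<in>\<D>'. h (Inf K) (Sup K))"
    proof (rule sum.mono_neutral_right)
      show "\<forall>K\<in>\<D> - \<D>'. h (Inf K) (Sup K) = 0"
      proof
        fix K assume K: "K \<in> \<D> - \<D>'"
        then obtain c d where "K = {c..d}" "c \<le> d" using division_of_real_interval[OF div] by blast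
        with K show "h (Inf K) (Sup K) = 0" by (auto simp: \<D>'_def degenerate)
      qed
    qed (use div in \<open>auto simp: \<D>'_def\<close>)
    also have "\<dots> = (\<Sum>k<N. h (Inf (g k)) (Sup (g k)))"
      unfolding N_def by (rule sum.reindex_bij_betw[OF g, symmetric])
    finally show ?thesis .
  qed
  ultimately show ?thesis by (rule that)
qed

lemma abs_cont_on_division_variation:
  fixes f :: "real \<Rightarrow> 'a::real_normed_vector"
  assumes "abs_cont_on f a b" "0 < e"
  obtains d where "0 < d"
    "\<And>\<D>. \<D> division_of \<Union>\<D> \<Longrightarrow> \<Union>\<D> \<subseteq> {a..b} \<Longrightarrow> measure lebesgue (\<Union>\<D>) < d \<Longrightarrow>
       (\<Sum>K\<in>\<D>. norm (f (Sup K) - f (Inf K))) < e"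
proof -
  obtain d where "0 < d" and small: "\<And>N u v. nonoverlapping_subintervals a b N u v \<Longrightarrow>
      (\<Sum>k<N. v k - u k) < d \<Longrightarrow> (\<Sum>k<N. norm (f (v k) - f (u k))) < e"
    by (fact abs_cont_onD[OF assms])
  have "(\<Sum>K\<in>\<D>. norm (f (Sup K) - f (Inf K))) < e"
    if div: "\<D> division_of \<Union>\<D>" and "\<Union>\<D> \<subseteq> {a..b}" and short: "measure lebesgue (\<Union>\<D>) < d"
    for \<D>
  proof -
    obtain N u v where uv: "nonoverlapping_subintervals a b N u v" and sums:
      "\<And>h :: real \<Rightarrow> real \<Rightarrow> real. (\<And>c. h c c = 0) \<Longrightarrow>
         (\<Sum>K\<in>\<D>. h (Inf K) (Sup K)) = (\<Sum>k<N. h (u k) (v k))"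
      using division_enumeration[OF div \<open>\<Union>\<D> \<subseteq> {a..b}\<close>] by blast
    have "(\<Sum>k<N. v k - u k) = (\<Sum>K\<in>\<D>. Sup K - Inf K)"
      by (rule sums[symmetric]) simp
    also have "\<dots> = (\<Sum>K\<in>\<D>. measure lebesgue K)"
      by (rule sum.cong[OF refl]) (auto elim!: division_of_real_interval[OF div])
    also have "\<dots> = measure lebesgue (\<Union>\<D>)" by (rule content_division[OF div])
    finally have "(\<Sum>k<N. norm (f (v k) - f (u k))) < e"
      using small[OF uv] short by simp
    then show ?thesis using sums[of "\<lambda>c d. norm (f d - f c)"] by simp
  qed
  with \<open>0 < d\<close> show ?thesis by (rule that)
qed

section \<open>Functions with vanishing derivative almost everywhere\<close>


lemma negligible_outer_open:
  assumes "negligible E" "0 < d"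
  obtains T where "open T" "E \<subseteq> T" "T \<in> lmeasurable" "measure lebesgue T < d"
proof -
  have E: "E \<in> lmeasurable" "measure lebesgue E = 0"
    using assms(1) by (simp_all add: negligible_imp_measurable negligible_imp_measure0)
  obtain T where T: "open T" "E \<subseteq> T" "T - E \<in> lmeasurable" "emeasure lebesgue (T - E) < ennreal d"
    using sets_lebesgue_outer_open[OF fmeasurableD[OF E(1)] assms(2)] by blast
  have TE: "T = (T - E) \<union> E" using T(2) by blast
  have "T \<in> lmeasurable" using T(3) E(1) by (subst TE) (rule fmeasurable.Un)
  moreover have "measure lebesgue T < d"
  proof -
    have "measure lebesgue T \<le> measure lebesgue (T - E) + measure lebesgue E"
      using T(3) E(1) by (subst TE) (rule measure_Un_le; auto)
    also have "measure lebesgue (T - E) < d"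
      using T(3,4) assms(2) by (simp add: emeasure_eq_measure2 ennreal_less_iff)
    finally show ?thesis using E(2) by simp
  qed
  ultimately show ?thesis using that T(1,2) by blast
qed

lemma zero_derivative_gauge:
  fixes f :: "real \<Rightarrow> 'a::real_normed_vector"
  assumes "open T" "E \<subseteq> T" and f': "\<And>x. x \<in> {a..b} - E \<Longrightarrow> (f has_vector_derivative 0) (at x within {a..b})"
    and "0 < \<epsilon>"
  obtains r where "\<And>x. 0 < r x" "\<And>x. x \<in> T \<Longrightarrow> ball x (r x) \<subseteq> T"
    "\<And>x y. x \<in> {a..b} - T \<Longrightarrow> y \<in> {a..b} \<Longrightarrow> dist y x < r x \<Longrightarrow> norm (f y - f x) \<le> \<epsilon> * dist y x"
proof -
  have "\<exists>r>0. (x \<in> T \<longrightarrow> ball x r \<subseteq> T) \<and>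
      (x \<in> {a..b} - T \<longrightarrow> (\<forall>y\<in>{a..b}. dist y x < r \<longrightarrow> norm (f y - f x) \<le> \<epsilon> * dist y x))" for x
  proof (cases "x \<in> T")
    case True
    then obtain r where "0 < r" "ball x r \<subseteq> T" using \<open>open T\<close> open_contains_ball by blast
    with True show ?thesis by blast
  next
    case False
    show ?thesis
    proof (cases "x \<in> {a..b}")
      case True
      with False \<open>E \<subseteq> T\<close> have "(f has_derivative (\<lambda>h. h *\<^sub>R 0)) (at x within {a..b})"
        using f' unfolding has_vector_derivative_def by blast
      then obtain r where "0 < r"
        "\<forall>y\<in>{a..b}. norm (y - x) < r \<longrightarrow> norm (f y - f x - (y - x) *\<^sub>R 0) \<le> \<epsilon> * norm (y - x)"
        using \<open>0 < \<epsilon>\<close> unfolding has_derivative_within_alt by blast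
      then show ?thesis using False by (auto simp: dist_norm)
    qed (use False zero_less_one in blast)
  qed
  then show ?thesis using that by metis
qed

lemma norm_increment_le_of_pointwise_bound:
  fixes f :: "real \<Rightarrow> 'a::real_normed_vector"
  assumes "x \<in> {c..d}" and bound: "\<And>y. y \<in> {c..d} \<Longrightarrow> norm (f y - f x) \<le> \<epsilon> * dist y x"
  shows "norm (f d - f c) \<le> \<epsilon> * (d - c)"
proof -
  have "norm (f d - f c) \<le> norm (f d - f x) + norm (f c - f x)"
    using norm_triangle_ineq4[of "f d - f x" "f c - f x"] by simp
  also have "\<dots> \<le> \<epsilon> * dist d x + \<epsilon> * dist c x"
    using assms(1) by (intro add_mono bound) auto
  also have "\<dots> = \<epsilon> * (d - c)"
    using assms(1) by (simp add: dist_real_def algebra_simps)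
  finally show ?thesis .
qed

text \<open>Distinct tags of a tagged division share an interval only if it is degenerate, which is
  why \<open>h\<close> has to vanish on points.\<close>

lemma sum_tagged_division_subset_snd:
  fixes h :: "real set \<Rightarrow> 'b::comm_monoid_add"
  assumes p: "p tagged_division_of {a..b}" and "q \<subseteq> p" and degenerate: "\<And>c. h {c..c} = 0"
  shows "(\<Sum>(x, K)\<in>q. h K) = (\<Sum>K\<in>snd ` q. h K)"
proof (subst sum.reindex_nontrivial)
  show "finite q" using p \<open>q \<subseteq> p\<close> finite_subset by blast
  show "h (snd t) = 0" if tt': "t \<in> q" "t' \<in> q" "t \<noteq> t'" "snd t = snd t'" for t t'
  proof -
    obtain x K x' where t: "t = (x, K)" "t' = (x', K)" using tt'(4) by (metis prod.collapse)
    have "(x, K) \<in> p" "(x', K) \<in> p" using tt'(1,2) t \<open>q \<subseteq> p\<close> by auto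
    then have "interior K = {}"
      using tagged_division_ofD(5)[OF p] tt'(3) t by fastforce
    moreover obtain c d where "K = {c..d}" "c \<le> d"
      using tagged_division_ofD(2,4)[OF p \<open>(x, K) \<in> p\<close>] by fastforce
    ultimately show ?thesis using t degenerate by simp
  qed
qed (simp add: case_prod_unfold o_def)

text \<open>Along a fine tagged division, the intervals inside a small open set \<open>T\<close> around the
  exceptional set are controlled by absolute continuity; the others have their tag outside \<open>T\<close>,
  where \<open>f\<close> is locally \<open>\<epsilon>\<close>-Lipschitz.\<close>

lemma abs_cont_on_zero_deriv_bound:
  fixes f :: "real \<Rightarrow> 'a::real_normed_vector"
  assumes "a \<le> b" and f: "abs_cont_on f a b" and "negligible E"
    and f': "\<And>x. x \<in> {a..b} - E \<Longrightarrow> (f has_vector_derivative 0) (at x within {a..b})"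
    and "0 < e" "0 < \<epsilon>"
  shows "norm (f b - f a) \<le> e + \<epsilon> * (b - a)"
proof -
  obtain d where "0 < d" and variation: "\<And>\<D>. \<D> division_of \<Union>\<D> \<Longrightarrow> \<Union>\<D> \<subseteq> {a..b} \<Longrightarrow>
      measure lebesgue (\<Union>\<D>) < d \<Longrightarrow> (\<Sum>K\<in>\<D>. norm (f (Sup K) - f (Inf K))) < e"
    by (fact abs_cont_on_division_variation[OF f \<open>0 < e\<close>])
  obtain T where "open T" "E \<subseteq> T" "T \<in> lmeasurable" "measure lebesgue T < d"
    using negligible_outer_open[OF \<open>negligible E\<close> \<open>0 < d\<close>] by blast
  obtain r where "\<And>x. 0 < r x" and r_T: "\<And>x. x \<in> T \<Longrightarrow> ball x (r x) \<subseteq> T"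
    and r_lip: "\<And>x y. x \<in> {a..b} - T \<Longrightarrow> y \<in> {a..b} \<Longrightarrow> dist y x < r x \<Longrightarrow>
      norm (f y - f x) \<le> \<epsilon> * dist y x"
    using zero_derivative_gauge[OF \<open>open T\<close> \<open>E \<subseteq> T\<close> f' \<open>0 < \<epsilon>\<close>] by metis
  have "gauge (\<lambda>x. ball x (r x))" using \<open>\<And>x. 0 < r x\<close> by (intro gauge_ball_dependent) auto
  then obtain p where p: "p tagged_division_of {a..b}" and fine: "(\<lambda>x. ball x (r x)) fine p"
    using fine_division_exists_real by blast
  define p1 where "p1 = {(x, K) \<in> p. K \<subseteq> T}"
  have "finite p" using p by blast
  have "norm (f b - f a) = norm (\<Sum>(x, K)\<in>p. f (Sup K) - f (Inf K))"
    by (simp add: additive_tagged_division_1[OF \<open>a \<le> b\<close> p])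
  also have "\<dots> \<le> (\<Sum>(x, K)\<in>p. norm (f (Sup K) - f (Inf K)))"
    unfolding case_prod_unfold by (rule norm_sum)
  also have "\<dots> = (\<Sum>(x, K)\<in>p - p1. norm (f (Sup K) - f (Inf K))) + (\<Sum>(x, K)\<in>p1. norm (f (Sup K) - f (Inf K)))"
    using \<open>finite p\<close> by (intro sum.subset_diff) (auto simp: p1_def)
  also have "\<dots> \<le> \<epsilon> * (b - a) + e"
  proof (rule add_mono)
    have "norm (f (Sup K) - f (Inf K)) \<le> \<epsilon> * measure lborel K" if xK: "(x, K) \<in> p - p1" for x K
    proof -
      have "(x, K) \<in> p" "\<not> K \<subseteq> T" using xK by (auto simp: p1_def)
      obtain c d where K: "K = {c..d}" using tagged_division_ofD(4)[OF p \<open>(x, K) \<in> p\<close>] by auto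
      have "x \<in> K" "K \<subseteq> {a..b}" "K \<subseteq> ball x (r x)"
        using tagged_division_ofD(2,3)[OF p \<open>(x, K) \<in> p\<close>] fine \<open>(x, K) \<in> p\<close> by (auto simp: fine_def)
      then have "x \<in> {a..b} - T" using r_T \<open>\<not> K \<subseteq> T\<close> by blast
      have "norm (f d - f c) \<le> \<epsilon> * (d - c)"
      proof (rule norm_increment_le_of_pointwise_bound)
        show "x \<in> {c..d}" using \<open>x \<in> K\<close> K by simp
        show "norm (f y - f x) \<le> \<epsilon> * dist y x" if "y \<in> {c..d}" for y
          using that K \<open>K \<subseteq> {a..b}\<close> \<open>K \<subseteq> ball x (r x)\<close> \<open>x \<in> {a..b} - T\<close>
          by (intro r_lip) (auto simp: dist_commute)
      qed
      then show ?thesis using \<open>x \<in> K\<close> by (simp add: K)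
    qed
    then have "(\<Sum>(x, K)\<in>p - p1. norm (f (Sup K) - f (Inf K))) \<le> (\<Sum>(x, K)\<in>p. \<epsilon> * measure lborel K)"
      using \<open>finite p\<close> \<open>0 < \<epsilon>\<close> by (intro order_trans[OF sum_mono sum_mono2]) auto
    also have "\<dots> = \<epsilon> * (b - a)"
      using additive_content_tagged_division[of p a b] p \<open>a \<le> b\<close>
      by (simp add: sum_distrib_left[symmetric] case_prod_unfold)
    finally show "(\<Sum>(x, K)\<in>p - p1. norm (f (Sup K) - f (Inf K))) \<le> \<epsilon> * (b - a)" .
    have div: "snd ` p1 division_of \<Union>(snd ` p1)"
    proof (rule division_of_subset)
      show "snd ` p division_of \<Union>(snd ` p)"
        using division_of_tagged_division[OF p] by (simp add: division_ofD(6))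
    qed (auto simp: p1_def)
    have "(\<Sum>(x, K)\<in>p1. norm (f (Sup K) - f (Inf K))) = (\<Sum>K\<in>snd ` p1. norm (f (Sup K) - f (Inf K)))"
      using p by (rule sum_tagged_division_subset_snd) (auto simp: p1_def)
    also have "\<dots> < e"
    proof (rule variation[OF div])
      show "\<Union>(snd ` p1) \<subseteq> {a..b}"
        using tagged_division_ofD(3)[OF p] by (force simp: p1_def)
      have "measure lebesgue (\<Union>(snd ` p1)) \<le> measure lebesgue T"
        using \<open>T \<in> lmeasurable\<close> lmeasurable_division[OF div]
        by (intro measure_mono_fmeasurable) (auto simp: p1_def)
      then show "measure lebesgue (\<Union>(snd ` p1)) < d" using \<open>measure lebesgue T < d\<close> by linarith
    qed
    finally show "(\<Sum>(x, K)\<in>p1. norm (f (Sup K) - f (Inf K))) \<le> e" by simp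
  qed
  finally show ?thesis by simp
qed

lemma abs_cont_on_zero_deriv_imp_eq:
  fixes f :: "real \<Rightarrow> 'a::real_normed_vector"
  assumes "a \<le> b" "abs_cont_on f a b" "negligible E"
    and "\<And>x. x \<in> {a..b} - E \<Longrightarrow> (f has_vector_derivative 0) (at x within {a..b})"
  shows "f b = f a"
proof (rule ccontr)
  define \<eta> where "\<eta> = norm (f b - f a)"
  assume "f b \<noteq> f a"
  then have "0 < \<eta>" by (simp add: \<eta>_def)
  then have "\<eta> \<le> \<eta> / 3 + \<eta> / (3 * (b - a + 1)) * (b - a)"
    unfolding \<eta>_def using assms by (intro abs_cont_on_zero_deriv_bound) (simp_all add: \<eta>_def)
  also have "\<eta> / (3 * (b - a + 1)) * (b - a) \<le> \<eta> / 3"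
    using \<open>0 < \<eta>\<close> \<open>a \<le> b\<close> by (simp add: field_simps)
  finally show False using \<open>0 < \<eta>\<close> by simp
qed

section \<open>The inverse of a matrix function\<close>


lemma tendsto_matrix_inv:
  fixes S :: "'b \<Rightarrow> 'a::{euclidean_space,real_algebra_1}^'n^'n"
  assumes S: "(S \<longlongrightarrow> L) F" and "invertible L" and inv: "\<forall>\<^sub>F t in F. invertible (S t)"
  shows "((\<lambda>t. matrix_inv (S t)) \<longlongrightarrow> matrix_inv L) F"
proof -
  obtain K where "0 < K" and K: "\<And>(A::'a^'n^'n) (B::'a^'n^'n). norm (A ** B) \<le> norm A * norm B * K"
    using bounded_bilinear.pos_bounded[OF bounded_bilinear_matrix_matrix_mult] by blast
  define c where "c = norm (matrix_inv L)"
  define \<delta> where "\<delta> = 1 / (2 * K * K * (c + 1))"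
  have "0 \<le> c" by (simp add: c_def)
  with \<open>0 < K\<close> have "0 < \<delta>" by (simp add: \<delta>_def)
  have "\<forall>\<^sub>F t in F. norm (matrix_inv (S t) - matrix_inv L) \<le> 2 * K * K * c * c * norm (S t - L)"
    using inv S[THEN tendstoD, OF \<open>0 < \<delta>\<close>]
  proof eventually_elim
    case (elim t)
    define M where "M = matrix_inv (S t)"
    define s where "s = norm (S t - L)"
    have "norm (M - matrix_inv L) = norm (M ** (L - S t) ** matrix_inv L)"
      using matrix_inv_diff[OF \<open>invertible L\<close> elim(1)] by (simp add: M_def)
    also have "\<dots> \<le> norm M * s * K * c * K"
      using K[of "M ** (L - S t)" "matrix_inv L"] K[of M "L - S t"] \<open>0 < K\<close> \<open>0 \<le> c\<close>
      by (simp add: s_def c_def norm_minus_commute mult_right_mono order_trans)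
    finally have bound: "norm (M - matrix_inv L) \<le> (K * K * c * s) * norm M"
      by (simp add: algebra_simps)
    have "K * K * c * s \<le> K * K * c * \<delta>"
      using elim(2) \<open>0 < K\<close> \<open>0 \<le> c\<close> by (intro mult_left_mono) (auto simp: s_def dist_norm)
    also have "\<dots> = c / (2 * (c + 1))"
      using \<open>0 < K\<close> \<open>0 \<le> c\<close> by (simp add: \<delta>_def)
    also have "\<dots> \<le> 1 / 2"
      using \<open>0 \<le> c\<close> by (simp add: field_simps)
    finally have half: "K * K * c * s \<le> 1 / 2" .
    have "norm M \<le> c + norm (M - matrix_inv L)"
      unfolding c_def by (rule norm_triangle_sub)
    also have "\<dots> \<le> c + norm M / 2"
      using bound half mult_right_mono[OF half norm_ge_zero[of M]] by simp
    finally have "norm M \<le> 2 * c" by simp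
    then have "(K * K * c * s) * norm M \<le> (K * K * c * s) * (2 * c)"
      using \<open>0 < K\<close> \<open>0 \<le> c\<close> by (intro mult_left_mono) (auto simp: s_def)
    with bound have "norm (M - matrix_inv L) \<le> (K * K * c * s) * (2 * c)"
      by linarith
    then show ?case by (simp add: M_def s_def algebra_simps)
  qed
  moreover have "((\<lambda>t. 2 * K * K * c * c * norm (S t - L)) \<longlongrightarrow> 0) F"
    using S by (intro tendsto_mult_right_zero) (simp add: tendsto_norm_zero_iff LIM_zero_iff)
  ultimately have "((\<lambda>t. matrix_inv (S t) - matrix_inv L) \<longlongrightarrow> 0) F"
    by (rule Lim_null_comparison)
  then show ?thesis by (simp add: LIM_zero_iff)
qed

lemma has_vector_derivative_iff_tendsto_quotient:
  fixes f :: "real \<Rightarrow> 'a::real_normed_vector"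
  shows "(f has_vector_derivative D) (at x within U) \<longleftrightarrow>
    ((\<lambda>y. (f y - f x) /\<^sub>R (y - x)) \<longlongrightarrow> D) (at x within U)"
proof -
  have eq: "norm (f y - f x - (y - x) *\<^sub>R D) / \<bar>y - x\<bar> = norm ((f y - f x) /\<^sub>R (y - x) - D)"
    if "y \<noteq> x" for y
  proof -
    have "f y - f x - (y - x) *\<^sub>R D = (y - x) *\<^sub>R ((f y - f x) /\<^sub>R (y - x) - D)"
      using that by (simp add: scaleR_right_diff_distrib)
    then show ?thesis using that by simp
  qed
  have "(f has_vector_derivative D) (at x within U) \<longleftrightarrow>
      ((\<lambda>y. norm (f y - f x - (y - x) *\<^sub>R D) / norm (y - x)) \<longlongrightarrow> 0) (at x within U)"
    by (simp add: has_vector_derivative_def has_derivative_iff_norm bounded_linear_scaleR_left)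
  also have "\<dots> \<longleftrightarrow> ((\<lambda>y. norm ((f y - f x) /\<^sub>R (y - x) - D)) \<longlongrightarrow> 0) (at x within U)"
    by (intro tendsto_cong always_eventually[THEN eventually_at_filter[THEN iffD2]]) (simp add: eq)
  also have "\<dots> \<longleftrightarrow> ((\<lambda>y. (f y - f x) /\<^sub>R (y - x)) \<longlongrightarrow> D) (at x within U)"
    by (simp add: tendsto_norm_zero_iff LIM_zero_iff)
  finally show ?thesis .
qed

lemma has_vector_derivative_matrix_inv:
  fixes S :: "real \<Rightarrow> 'a::{euclidean_space,real_algebra_1}^'n^'n"
  assumes S': "(S has_vector_derivative S') (at x within U)"
    and inv: "\<And>t. t \<in> U \<Longrightarrow> invertible (S t)" and "x \<in> U"
  shows "((\<lambda>t. matrix_inv (S t)) has_vector_derivative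
    - (matrix_inv (S x) ** S' ** matrix_inv (S x))) (at x within U)"
proof -
  interpret mm: bounded_bilinear "(**) :: 'a^'n^'n \<Rightarrow> 'a^'n^'n \<Rightarrow> 'a^'n^'n"
    by (rule bounded_bilinear_matrix_matrix_mult)
  define M where "M t = matrix_inv (S t)" for t
  have "(S \<longlongrightarrow> S x) (at x within U)"
    using has_vector_derivative_continuous[OF S'] by (simp add: continuous_within)
  then have "(M \<longlongrightarrow> M x) (at x within U)"
    unfolding M_def using inv \<open>x \<in> U\<close>
    by (intro tendsto_matrix_inv) (auto simp: eventually_at_filter)
  moreover have "((\<lambda>y. - ((S y - S x) /\<^sub>R (y - x))) \<longlongrightarrow> - S') (at x within U)"
    using S' by (intro tendsto_minus) (simp add: has_vector_derivative_iff_tendsto_quotient)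
  ultimately have "((\<lambda>y. M y ** (- ((S y - S x) /\<^sub>R (y - x))) ** M x) \<longlongrightarrow> M x ** (- S') ** M x)
      (at x within U)"
    by (intro mm.tendsto tendsto_const)
  moreover have "\<forall>\<^sub>F y in at x within U.
      M y ** (- ((S y - S x) /\<^sub>R (y - x))) ** M x = (M y - M x) /\<^sub>R (y - x)"
    unfolding eventually_at_filter
  proof (intro always_eventually allI impI)
    fix y assume "y \<noteq> x" "y \<in> U"
    have "M y - M x = M y ** (S x - S y) ** M x"
      unfolding M_def by (rule matrix_inv_diff[OF inv[OF \<open>x \<in> U\<close>] inv[OF \<open>y \<in> U\<close>]])
    moreover have "- ((S y - S x) /\<^sub>R (y - x)) = (S x - S y) /\<^sub>R (y - x)"
      by (simp only: scaleR_minus_right[symmetric] minus_diff_eq)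
    ultimately show "M y ** (- ((S y - S x) /\<^sub>R (y - x))) ** M x = (M y - M x) /\<^sub>R (y - x)"
      by (simp only: mm.scaleR_left mm.scaleR_right)
  qed
  ultimately have "((\<lambda>y. (M y - M x) /\<^sub>R (y - x)) \<longlongrightarrow> M x ** (- S') ** M x) (at x within U)"
    by (rule Lim_transform_eventually)
  then show ?thesis
    by (simp add: has_vector_derivative_iff_tendsto_quotient M_def mm.minus_left mm.minus_right)
qed

lemma abs_cont_on_matrix_inv:
  fixes S :: "real \<Rightarrow> 'a::{euclidean_space,real_algebra_1}^'n^'n"
  assumes S: "abs_cont_on S a b" and inv: "\<And>t. t \<in> {a..b} \<Longrightarrow> invertible (S t)"
  shows "abs_cont_on (\<lambda>t. matrix_inv (S t)) a b"
proof -
  obtain K where "0 < K" and K: "\<And>(A::'a^'n^'n) (B::'a^'n^'n). norm (A ** B) \<le> norm A * norm B * K"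
    using bounded_bilinear.pos_bounded[OF bounded_bilinear_matrix_matrix_mult] by blast
  have "continuous_on {a..b} (\<lambda>t. matrix_inv (S t))"
    unfolding continuous_on_def
  proof
    fix x assume "x \<in> {a..b}"
    then show "((\<lambda>t. matrix_inv (S t)) \<longlongrightarrow> matrix_inv (S x)) (at x within {a..b})"
      using abs_cont_on_imp_continuous_on[OF S] inv
      by (intro tendsto_matrix_inv) (auto simp: continuous_on_def eventually_at_filter)
  qed
  then obtain B where "0 < B" and B: "\<And>t. t \<in> {a..b} \<Longrightarrow> norm (matrix_inv (S t)) \<le> B"
    using compact_continuous_image[OF _ compact_Icc] by (metis bounded_pos compact_imp_bounded image_eqI)
  show ?thesis
  proof (rule abs_cont_on_dominated[OF S S, of "K * K * B * B"])
    fix u v assume "a \<le> u" "u \<le> v" "v \<le> b"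
    then have "u \<in> {a..b}" "v \<in> {a..b}" by auto
    have "norm (matrix_inv (S v) - matrix_inv (S u)) = norm (matrix_inv (S v) ** (S u - S v) ** matrix_inv (S u))"
      by (simp only: matrix_inv_diff[OF inv[OF \<open>u \<in> {a..b}\<close>] inv[OF \<open>v \<in> {a..b}\<close>]])
    also have "\<dots> \<le> norm (matrix_inv (S v)) * norm (S v - S u) * K * norm (matrix_inv (S u)) * K"
      using K[of "matrix_inv (S v) ** (S u - S v)" "matrix_inv (S u)"] K[of "matrix_inv (S v)" "S u - S v"] \<open>0 < K\<close>
      by (simp add: norm_minus_commute mult_right_mono order_trans)
    also have "\<dots> \<le> B * norm (S v - S u) * K * B * K"
      using B[OF \<open>u \<in> {a..b}\<close>] B[OF \<open>v \<in> {a..b}\<close>] \<open>0 < K\<close> \<open>0 < B\<close>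
      by (intro mult_right_mono mult_mono) auto
    also have "\<dots> \<le> K * K * B * B * (norm (S v - S u) + norm (S v - S u))"
      using \<open>0 < K\<close> \<open>0 < B\<close> by (simp add: algebra_simps)
    finally show "norm (matrix_inv (S v) - matrix_inv (S u))
        \<le> K * K * B * B * (norm (S v - S u) + norm (S v - S u))" .
  qed (use \<open>0 < K\<close> \<open>0 < B\<close> in simp)
qed

section \<open>The transformed system\<close>


lemma sylvester_identity_preserved:
  fixes A1 A2 :: "'a::{euclidean_space,real_normed_field}^'n^'n" and S :: "real \<Rightarrow> 'a^'n^'n"
    and P1 :: "real \<Rightarrow> 'a^'m^'n" and P2 :: "real \<Rightarrow> 'a^'n^'m" and Q1 Q0 :: "real \<Rightarrow> 'a^'m^'m"
  assumes "a \<le> b" "abs_cont_on S a b" "abs_cont_on P1 a b" "abs_cont_on P2 a b" "negligible N"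
    and P1': "\<And>t. t \<in> {a..b} - N \<Longrightarrow> (P1 has_vector_derivative A1 ** P1 t ** Q1 t + P1 t ** Q0 t) (at t)"
    and P2': "\<And>t. t \<in> {a..b} - N \<Longrightarrow> (P2 has_vector_derivative - (Q1 t ** P2 t ** A2) - Q0 t ** P2 t) (at t)"
    and S': "\<And>t. t \<in> {a..b} - N \<Longrightarrow> (S has_vector_derivative P1 t ** Q1 t ** P2 t) (at t)"
    and "A1 ** S a - S a ** A2 = P1 a ** P2 a"
  shows "A1 ** S b - S b ** A2 = P1 b ** P2 b"
proof -
  note mm = bounded_bilinear_matrix_matrix_mult
  define D where "D t = A1 ** S t - S t ** A2 - P1 t ** P2 t" for t
  have "abs_cont_on D a b"
    unfolding D_def by (intro abs_cont_on_diff abs_cont_on_bilinear[OF mm] abs_cont_on_const assms)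
  moreover have "(D has_vector_derivative 0) (at t within {a..b})" if "t \<in> {a..b} - N" for t
  proof -
    have "(D has_vector_derivative 0) (at t)"
      unfolding D_def
      by (rule has_vector_derivative_eq_rhs,
          (rule has_vector_derivative_diff bounded_bilinear.has_vector_derivative[OF mm]
            has_vector_derivative_const P1' P2' S' that)+)
        (simp add: matrix_ring_simps)
    then show ?thesis by (rule has_vector_derivative_at_within)
  qed
  ultimately have "D b = D a"
    using abs_cont_on_zero_deriv_imp_eq[OF \<open>a \<le> b\<close> _ \<open>negligible N\<close>] by blast
  with \<open>A1 ** S a - S a ** A2 = P1 a ** P2 a\<close> show ?thesis by (simp add: D_def)
qed

lemma gauge_transformed_solution_has_derivative:
  fixes A1 A2 :: "'a::{euclidean_space,real_normed_field}^'n^'n" and S :: "real \<Rightarrow> 'a^'n^'n"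
    and P1 :: "real \<Rightarrow> 'a^'m^'n" and P2 :: "real \<Rightarrow> 'a^'n^'m" and Q1 Q0 :: "real \<Rightarrow> 'a^'m^'m"
    and y :: "real \<Rightarrow> 'a^'m"
  assumes P1': "(P1 has_vector_derivative A1 ** P1 x ** Q1 x + P1 x ** Q0 x) (at x)"
    and P2': "(P2 has_vector_derivative - (Q1 x ** P2 x ** A2) - Q0 x ** P2 x) (at x)"
    and S': "(S has_vector_derivative P1 x ** Q1 x ** P2 x) (at x)"
    and y': "(y has_vector_derivative - (lam *s (Q1 x *v y x) + Q0 x *v y x)) (at x)"
    and "open U" "x \<in> U" and inv: "\<And>t. t \<in> U \<Longrightarrow> invertible (S t)"
    and "invertible (A1 - mat lam)" and sylvester: "A1 ** S x - S x ** A2 = P1 x ** P2 x"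
  defines "W \<equiv> \<lambda>t. mat 1 - P2 t ** matrix_inv (S t) ** matrix_inv (A1 - mat lam) ** P1 t"
    and "X \<equiv> P2 x ** matrix_inv (S x) ** P1 x"
  shows "((\<lambda>t. W t *v y t) has_vector_derivative
    - (lam *s (Q1 x *v (W x *v y x)) + (Q0 x - (Q1 x ** X - X ** Q1 x)) *v (W x *v y x))) (at x)"
proof -
  note mm = bounded_bilinear_matrix_matrix_mult
  define M where "M t = matrix_inv (S t)" for t
  define R where "R = matrix_inv (A1 - mat lam)"
  define B where "B = mat_smult lam (Q1 x) + Q0 x"
  define C where "C = B - (Q1 x ** X - X ** Q1 x)"
  have "(M has_vector_derivative - (M x ** (P1 x ** Q1 x ** P2 x) ** M x)) (at x within U)"
    unfolding M_def using has_vector_derivative_at_within[OF S'] inv \<open>x \<in> U\<close>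
    by (rule has_vector_derivative_matrix_inv)
  then have M': "(M has_vector_derivative - (M x ** (P1 x ** Q1 x ** P2 x) ** M x)) (at x)"
    using at_within_open[OF \<open>x \<in> U\<close> \<open>open U\<close>] by simp
  have identity: "- ((- (Q1 x ** P2 x ** A2) - Q0 x ** P2 x) ** M x ** R ** P1 x
      + P2 x ** (- (M x ** (P1 x ** Q1 x ** P2 x) ** M x)) ** R ** P1 x
      + P2 x ** M x ** R ** (A1 ** P1 x ** Q1 x + P1 x ** Q0 x)) = W x ** B - C ** W x"
    unfolding W_def X_def C_def B_def M_def R_def
    by (rule gauge_transform_derivative_identity[where S = "S x"])
      (simp_all add: sylvester matrix_inv_left matrix_inv_right inv \<open>x \<in> U\<close>
        \<open>invertible (A1 - mat lam)\<close>)
  have W': "(W has_vector_derivative W x ** B - C ** W x) (at x)"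
    unfolding identity[symmetric]
    unfolding W_def M_def[symmetric] R_def[symmetric]
    by (rule has_vector_derivative_eq_rhs,
        (rule has_vector_derivative_diff bounded_bilinear.has_vector_derivative[OF mm]
          has_vector_derivative_const P1' P2' M')+)
      (simp add: matrix_ring_simps)
  have B: "lam *s (Q1 x *v v) + Q0 x *v v = B *v v" for v
    by (simp add: B_def matrix_vector_mult_add_rdistrib mat_smult_matrix_vector_mult)
  have C: "lam *s (Q1 x *v v) + (Q0 x - (Q1 x ** X - X ** Q1 x)) *v v = C *v v" for v
    by (simp add: C_def B_def matrix_vector_mult_add_rdistrib matrix_vector_mult_diff_rdistrib
        mat_smult_matrix_vector_mult algebra_simps)
  show ?thesis
    unfolding B C
    by (rule has_vector_derivative_eq_rhs,
        rule bounded_bilinear.has_vector_derivative[OF bounded_bilinear_matrix_vector_mult W' y'[unfolded B]])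
      (simp add: matrix_vector_mult_diff_rdistrib matrix_vector_mul_assoc
        bounded_bilinear.minus_right[OF bounded_bilinear_matrix_vector_mult])
qed

lemma gauge_transformed_solution:
  fixes A1 A2 :: "'a::{euclidean_space,real_normed_field}^'n^'n" and S :: "real \<Rightarrow> 'a^'n^'n"
    and P1 :: "real \<Rightarrow> 'a^'m^'n" and P2 :: "real \<Rightarrow> 'a^'n^'m" and Q1 Q0 :: "real \<Rightarrow> 'a^'m^'m"
    and y :: "real \<Rightarrow> 'a^'m"
  assumes "is_interval J" and "negligible N"
    and ac: "\<And>a b. {a..b} \<subseteq> J \<Longrightarrow>
      abs_cont_on P1 a b \<and> abs_cont_on P2 a b \<and> abs_cont_on S a b \<and> abs_cont_on y a b"
    and P1': "\<And>t. t \<in> J - N \<Longrightarrow> (P1 has_vector_derivative A1 ** P1 t ** Q1 t + P1 t ** Q0 t) (at t)"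
    and P2': "\<And>t. t \<in> J - N \<Longrightarrow> (P2 has_vector_derivative - (Q1 t ** P2 t ** A2) - Q0 t ** P2 t) (at t)"
    and S': "\<And>t. t \<in> J - N \<Longrightarrow> (S has_vector_derivative P1 t ** Q1 t ** P2 t) (at t)"
    and y': "\<And>t. t \<in> J - N \<Longrightarrow> (y has_vector_derivative - (lam *s (Q1 t *v y t) + Q0 t *v y t)) (at t)"
    and inv: "\<And>t. t \<in> J \<Longrightarrow> invertible (S t)" and "invertible (A1 - mat lam)"
    and sylvester: "\<And>t. t \<in> J \<Longrightarrow> A1 ** S t - S t ** A2 = P1 t ** P2 t"
  defines "W \<equiv> \<lambda>t. mat 1 - P2 t ** matrix_inv (S t) ** matrix_inv (A1 - mat lam) ** P1 t"
    and "X \<equiv> \<lambda>t. P2 t ** matrix_inv (S t) ** P1 t"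
  shows "ac_solution J (\<lambda>t v. - (lam *s (Q1 t *v v) + (Q0 t - (Q1 t ** X t - X t ** Q1 t)) *v v))
    (\<lambda>t. W t *v y t)"
  unfolding ac_solution_def
proof (intro conjI allI impI)
  fix a b assume "{a..b} \<subseteq> J"
  then show "abs_cont_on (\<lambda>t. W t *v y t) a b"
    unfolding W_def using ac inv
    by (intro abs_cont_on_bilinear[OF bounded_bilinear_matrix_vector_mult] abs_cont_on_diff
        abs_cont_on_bilinear[OF bounded_bilinear_matrix_matrix_mult] abs_cont_on_const
        abs_cont_on_matrix_inv) auto
next
  text \<open>The frontier of an interval is negligible, so a.e. point of J is interior.\<close>
  have "N \<union> frontier J \<in> null_sets lebesgue"
    using \<open>negligible N\<close> negligible_convex_frontier[OF is_interval_convex[OF \<open>is_interval J\<close>]]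
    by (simp add: negligible_iff_null_sets null_sets.Un)
  moreover have "((\<lambda>t. W t *v y t) has_vector_derivative
      - (lam *s (Q1 t *v (W t *v y t)) + (Q0 t - (Q1 t ** X t - X t ** Q1 t)) *v (W t *v y t))) (at t)"
    if "t \<in> J" "t \<notin> N \<union> frontier J" for t
  proof -
    have "t \<in> interior J" using that closure_subset by (auto simp: frontier_def)
    then show ?thesis
      unfolding W_def X_def using that interior_subset[of J]
      by (intro gauge_transformed_solution_has_derivative[where U = "interior J" and ?A2.0 = A2]
          P1' P2' S' y' inv sylvester
          \<open>invertible (A1 - mat lam)\<close> open_interior) auto
  qed
  ultimately show "AE t in lebesgue. t \<in> J \<longrightarrow> ((\<lambda>t. W t *v y t) has_vector_derivative
      - (lam *s (Q1 t *v (W t *v y t)) + (Q0 t - (Q1 t ** X t - X t ** Q1 t)) *v (W t *v y t))) (at t)"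
    by (auto elim!: AE_I')
qed

lemma half_line_Icc_subset: "x \<in> half_line l \<Longrightarrow> {0..x} \<subseteq> half_line l"
  unfolding half_line_def by (auto intro: le_less_trans[of _ "ereal x"])

theorem theorem2p1:
  fixes l :: ereal
    and Q1 Q0 :: "real \<Rightarrow> complex^'m^'m"
    and A1 A2 :: "complex^'n^'n"
    and S :: "real \<Rightarrow> complex^'n^'n"
    and Pi1 Pi2 :: "real \<Rightarrow> complex^'m^'n"
    and lam :: complex
    and y :: "real \<Rightarrow> complex^'m"
  assumes l_pos: "0 < l"
    and Q1_sum: "loc_summable (half_line l) Q1"
    and Q0_sum: "loc_summable (half_line l) Q0"
    and ident: "A1 ** S 0 - S 0 ** A2 = Pi1 0 ** ctrans (Pi2 0)"
    and Pi1_eq: "ac_solution (half_line l) (\<lambda>x P. A1 ** P ** Q1 x + P ** Q0 x) Pi1"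
    and Pi2_eq: "ac_solution (half_line l) (\<lambda>x P. - (Q1 x ** P ** A2) - Q0 x ** P)
                   (\<lambda>x. ctrans (Pi2 x))"
    and S_eq: "ac_solution (half_line l) (\<lambda>x _. Pi1 x ** Q1 x ** ctrans (Pi2 x)) S"
    and not_eig: "invertible (A1 - mat lam)"
    and y_eq: "ac_solution (half_line l) (\<lambda>x v. - (lam *s (Q1 x *v v) + Q0 x *v v)) y"
  shows "\<forall>J. is_interval J \<and> J \<subseteq> half_line l \<and> (\<forall>x\<in>J. invertible (S x)) \<longrightarrow>
     ac_solution J
       (\<lambda>x v. - (lam *s (Q1 x *v v)
                 + (Q0 x - (Q1 x ** (ctrans (Pi2 x) ** matrix_inv (S x) ** Pi1 x)
                            - (ctrans (Pi2 x) ** matrix_inv (S x) ** Pi1 x) ** Q1 x)) *v v))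
       (\<lambda>x. (mat 1 - ctrans (Pi2 x) ** matrix_inv (S x) ** matrix_inv (A1 - mat lam) ** Pi1 x) *v y x)"
proof -
  define P2 where "P2 x = ctrans (Pi2 x)" for x
  have "AE x in lebesgue. x \<in> half_line l \<longrightarrow>
      (Pi1 has_vector_derivative A1 ** Pi1 x ** Q1 x + Pi1 x ** Q0 x) (at x) \<and>
      (P2 has_vector_derivative - (Q1 x ** P2 x ** A2) - Q0 x ** P2 x) (at x) \<and>
      (S has_vector_derivative Pi1 x ** Q1 x ** P2 x) (at x) \<and>
      (y has_vector_derivative - (lam *s (Q1 x *v y x) + Q0 x *v y x)) (at x)"
    using Pi1_eq[unfolded ac_solution_def, THEN conjunct2] Pi2_eq[unfolded ac_solution_def, THEN conjunct2]
      S_eq[unfolded ac_solution_def, THEN conjunct2] y_eq[unfolded ac_solution_def, THEN conjunct2]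
    by eventually_elim (simp add: P2_def[abs_def])
  then obtain N where "N \<in> null_sets lebesgue" and derivs: "\<And>x. x \<in> half_line l - N \<Longrightarrow>
      (Pi1 has_vector_derivative A1 ** Pi1 x ** Q1 x + Pi1 x ** Q0 x) (at x) \<and>
      (P2 has_vector_derivative - (Q1 x ** P2 x ** A2) - Q0 x ** P2 x) (at x) \<and>
      (S has_vector_derivative Pi1 x ** Q1 x ** P2 x) (at x) \<and>
      (y has_vector_derivative - (lam *s (Q1 x *v y x) + Q0 x *v y x)) (at x)"
    by (auto elim!: AE_E3)
  then have "negligible N" by (simp add: negligible_iff_null_sets)
  have ac: "abs_cont_on Pi1 a b \<and> abs_cont_on P2 a b \<and> abs_cont_on S a b \<and> abs_cont_on y a b"
    if "{a..b} \<subseteq> half_line l" for a b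
    using that Pi1_eq Pi2_eq S_eq y_eq by (simp add: ac_solution_def P2_def[abs_def])
  have sylvester: "A1 ** S x - S x ** A2 = Pi1 x ** P2 x" if "x \<in> half_line l" for x
  proof (rule sylvester_identity_preserved[where N = N and ?Q1.0 = Q1 and ?Q0.0 = Q0])
    show "0 \<le> x" using that by (simp add: half_line_def)
    show "abs_cont_on S 0 x" "abs_cont_on Pi1 0 x" "abs_cont_on P2 0 x"
      using ac[OF half_line_Icc_subset[OF that]] by simp_all
    show "A1 ** S 0 - S 0 ** A2 = Pi1 0 ** P2 0" using ident by (simp add: P2_def)
  qed (use derivs half_line_Icc_subset[OF that] \<open>negligible N\<close> in blast)+
  show ?thesis
    unfolding P2_def[symmetric]
  proof (intro allI impI, elim conjE, rule gauge_transformed_solution)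
    fix J assume "J \<subseteq> half_line l" "\<forall>x\<in>J. invertible (S x)"
    show "abs_cont_on Pi1 a b \<and> abs_cont_on P2 a b \<and> abs_cont_on S a b \<and> abs_cont_on y a b"
      if "{a..b} \<subseteq> J" for a b
      using ac that \<open>J \<subseteq> half_line l\<close> by blast
    show "invertible (S t)" "A1 ** S t - S t ** A2 = Pi1 t ** P2 t" if "t \<in> J" for t
      using that \<open>\<forall>x\<in>J. invertible (S x)\<close> sylvester \<open>J \<subseteq> half_line l\<close> by auto
    show "(Pi1 has_vector_derivative A1 ** Pi1 t ** Q1 t + Pi1 t ** Q0 t) (at t)"
      "(P2 has_vector_derivative - (Q1 t ** P2 t ** A2) - Q0 t ** P2 t) (at t)"
      "(S has_vector_derivative Pi1 t ** Q1 t ** P2 t) (at t)"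
      "(y has_vector_derivative - (lam *s (Q1 t *v y t) + Q0 t *v y t)) (at t)"
      if "t \<in> J - N" for t
      using that derivs \<open>J \<subseteq> half_line l\<close> by blast+
  qed (simp_all add: \<open>negligible N\<close> not_eig)
qed

end
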